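(* Let $A$ be a ring with a nilpotent two-sided ideal $\mathfrak{a}$, and assume the ring $\operatorname{gr}_{\mathfrak{a}}(A)=\bigoplus_{i\ge0}\mathfrak{a}^i/\mathfrak{a}^{i+1}$ is commutative. Let $s\in A$. (1) The set $\{s^j\}_{j\ge0}$ is a denominator set in $A$; let $A_s$ be the resulting ring of fractions. (2) Let $\bar A:=A/\mathfrak{a}$, let $\bar s$ be the image of $s$ in $\bar A$, and let $\mathfrak{a}_s$ be the kernel of the canonical ring surjection $A_s\to\bar A_{\bar s}$. Then $\mathfrak{a}_s=\mathfrak{a}A_s=A_s\mathfrak{a}$, and this is a nilpotent ideal. (3) For any $a\in A$ with image $\bar a\in\bar A$, the element $a$ is invertible in $A_s$ if and only if $\bar a$ is invertible in $\bar A_{\bar s}$.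
   Context: A subset $S$ of a ring $A$ is a denominator set if it is multiplicatively closed and satisfies the left and right Ore conditions and the left and right torsion conditions; then the (Ore) ring of fractions $A_S$ exists, with $A\to A_S$ making elements of $S$ invertible, universal for this property, with every element of the form $a_1s_1^{-1}=s_2^{-1}a_2$. *)

theory Defs
  imports "HOL-Algebra.Algebra"
begin

definition list_prod :: "('a, 'm) ring_scheme \<Rightarrow> 'a list \<Rightarrow> 'a" where
  "list_prod R xs = foldr (\<lambda>x acc. x \<otimes>\<^bsub>R\<^esub> acc) xs \<one>\<^bsub>R\<^esub>"

definition ideal_pow :: "('a, 'm) ring_scheme \<Rightarrow> 'a set \<Rightarrow> nat \<Rightarrow> 'a set" where
  "ideal_pow R I n = Idl\<^bsub>R\<^esub> {list_prod R xs | xs. length xs = n \<and> set xs \<subseteq> I}"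

definition nilpotent_ideal :: "('a, 'm) ring_scheme \<Rightarrow> 'a set \<Rightarrow> bool" where
  "nilpotent_ideal R I \<longleftrightarrow> (\<exists>n. ideal_pow R I n = {\<zero>\<^bsub>R\<^esub>})"

text \<open>The associated graded ring gr_I(R) = (+) I^i/I^(i+1) is commutative.
  Unfolded: homogeneous elements commute, i.e. for x in I^i, y in I^j,
  xy - yx lies in I^(i+j+1).\<close>
definition gr_commutative :: "('a, 'm) ring_scheme \<Rightarrow> 'a set \<Rightarrow> bool" where
  "gr_commutative R I \<longleftrightarrow>
     (\<forall>i j. \<forall>x \<in> ideal_pow R I i. \<forall>y \<in> ideal_pow R I j.
        x \<otimes>\<^bsub>R\<^esub> y \<ominus>\<^bsub>R\<^esub> y \<otimes>\<^bsub>R\<^esub> x \<in> ideal_pow R I (i + j + 1))"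

definition powers :: "('a, 'm) ring_scheme \<Rightarrow> 'a \<Rightarrow> 'a set" where
  "powers R s = {s [^]\<^bsub>R\<^esub> (j::nat) | j. True}"

definition denominator_set :: "('a, 'm) ring_scheme \<Rightarrow> 'a set \<Rightarrow> bool" where
  "denominator_set R S \<longleftrightarrow>
     S \<subseteq> carrier R \<and> \<one>\<^bsub>R\<^esub> \<in> S \<and> (\<forall>s\<in>S. \<forall>t\<in>S. s \<otimes>\<^bsub>R\<^esub> t \<in> S) \<and>
     \<comment> \<open>right Ore: aS meets sA\<close>
     (\<forall>a\<in>carrier R. \<forall>s\<in>S. \<exists>b\<in>carrier R. \<exists>t\<in>S. a \<otimes>\<^bsub>R\<^esub> t = s \<otimes>\<^bsub>R\<^esub> b) \<and>
     \<comment> \<open>left Ore: Sa meets As\<close>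
     (\<forall>a\<in>carrier R. \<forall>s\<in>S. \<exists>b\<in>carrier R. \<exists>t\<in>S. t \<otimes>\<^bsub>R\<^esub> a = b \<otimes>\<^bsub>R\<^esub> s) \<and>
     \<comment> \<open>right torsion: sa = 0 implies at = 0 for some t\<close>
     (\<forall>a\<in>carrier R. \<forall>s\<in>S. s \<otimes>\<^bsub>R\<^esub> a = \<zero>\<^bsub>R\<^esub> \<longrightarrow> (\<exists>t\<in>S. a \<otimes>\<^bsub>R\<^esub> t = \<zero>\<^bsub>R\<^esub>)) \<and>
     \<comment> \<open>left torsion: as = 0 implies ta = 0 for some t\<close>
     (\<forall>a\<in>carrier R. \<forall>s\<in>S. a \<otimes>\<^bsub>R\<^esub> s = \<zero>\<^bsub>R\<^esub> \<longrightarrow> (\<exists>t\<in>S. t \<otimes>\<^bsub>R\<^esub> a = \<zero>\<^bsub>R\<^esub>))"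

text \<open>This is the standard textbook characterisation of the Ore localization
  (equivalent to the universal property).\<close>
definition ring_of_fractions ::
  "('a, 'm) ring_scheme \<Rightarrow> 'a set \<Rightarrow> ('b, 'n) ring_scheme \<Rightarrow> ('a \<Rightarrow> 'b) \<Rightarrow> bool" where
  "ring_of_fractions R S B i \<longleftrightarrow>
     ring B \<and> i \<in> ring_hom R B \<and> i ` S \<subseteq> Units B \<and>
     (\<forall>b\<in>carrier B. \<exists>a\<in>carrier R. \<exists>s\<in>S. b = i a \<otimes>\<^bsub>B\<^esub> inv\<^bsub>B\<^esub> (i s)) \<and>
     (\<forall>b\<in>carrier B. \<exists>a\<in>carrier R. \<exists>s\<in>S. b = inv\<^bsub>B\<^esub> (i s) \<otimes>\<^bsub>B\<^esub> i a) \<and>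
     (\<forall>a\<in>carrier R. i a = \<zero>\<^bsub>B\<^esub> \<longleftrightarrow> (\<exists>t\<in>S. a \<otimes>\<^bsub>R\<^esub> t = \<zero>\<^bsub>R\<^esub>))"

text \<open>Extension of an ideal I of R along i : R \<rightarrow> B as a right ideal, I B
  (finite sums of i(x) b), and as a left ideal, B I (finite sums of b i(x)).\<close>
definition ext_right :: "('b, 'n) ring_scheme \<Rightarrow> ('a \<Rightarrow> 'b) \<Rightarrow> 'a set \<Rightarrow> 'b set" where
  "ext_right B i I = {foldr (\<lambda>p acc. (i (fst p) \<otimes>\<^bsub>B\<^esub> snd p) \<oplus>\<^bsub>B\<^esub> acc) ps \<zero>\<^bsub>B\<^esub>
                        | ps. set ps \<subseteq> I \<times> carrier B}"

definition ext_left :: "('b, 'n) ring_scheme \<Rightarrow> ('a \<Rightarrow> 'b) \<Rightarrow> 'a set \<Rightarrow> 'b set" where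
  "ext_left B i I = {foldr (\<lambda>p acc. (snd p \<otimes>\<^bsub>B\<^esub> i (fst p)) \<oplus>\<^bsub>B\<^esub> acc) ps \<zero>\<^bsub>B\<^esub>
                        | ps. set ps \<subseteq> I \<times> carrier B}"

end

theory Submission
  imports Defs
begin

text \<open>Commutativity of gr_I(A) says that commuting with s raises the I-adic degree, so
  ad(s) is nilpotent when I^N = 0. Expanding a s^(m+N) with a s = s a + [a, s] then gives
  a' with a s^(m+N) = s^m a', where a' lies in every two-sided ideal containing a: this
  yields the Ore and torsion conditions for the powers of s, and lets denominators pass
  elements of I^n without lowering their degree. The map A_s \<rightarrow> (A/I)_s comes from
  the universal property; its kernel consists of the fractions y/s^n with y in I, hence is
  I A_s = A_s I, and a product of N kernel elements has its numerator in I^N = 0. Finally a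
  surjection with nil kernel reflects units: if x has unit image and y maps to its inverse,
  then 1 - x y and 1 - y x are nilpotent.\<close>

lemma (in ring) list_prod_Nil [simp]: "list_prod R [] = \<one>"
  by (simp add: list_prod_def)

lemma (in ring) list_prod_Cons [simp]: "list_prod R (x # xs) = x \<otimes> list_prod R xs"
  by (simp add: list_prod_def)

lemma (in ring) list_prod_closed: "set xs \<subseteq> carrier R \<Longrightarrow> list_prod R xs \<in> carrier R"
  by (induct xs) auto

lemma (in ring) list_prod_replicate: "x \<in> carrier R \<Longrightarrow> list_prod R (replicate n x) = x [^] n"
  by (induct n) (simp_all add: nat_pow_comm[of x 1 _, simplified])

lemma (in ring) ideal_pow_is_ideal: "I \<subseteq> carrier R \<Longrightarrow> ideal (ideal_pow R I n) R"
  unfolding ideal_pow_def by (rule genideal_ideal) (auto intro!: list_prod_closed)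

lemma (in ring) ideal_pow_subset: "I \<subseteq> carrier R \<Longrightarrow> ideal_pow R I n \<subseteq> carrier R"
  using ideal_pow_is_ideal ideal.axioms(1) additive_subgroup.a_subset by blast

lemma (in ring) list_prod_in_ideal_pow:
  "I \<subseteq> carrier R \<Longrightarrow> set xs \<subseteq> I \<Longrightarrow> list_prod R xs \<in> ideal_pow R I (length xs)"
  unfolding ideal_pow_def
  by (rule subsetD[OF genideal_self]) (auto intro!: list_prod_closed)

lemma (in ring) ideal_pow_0 [simp]: "ideal_pow R I 0 = carrier R"
proof -
  have "{list_prod R xs |xs. length xs = 0 \<and> set xs \<subseteq> I} = {\<one>}" by auto
  thus ?thesis unfolding ideal_pow_def using genideal_one by simp
qed

lemma (in ideal) ideal_pow_1 [simp]: "ideal_pow R I 1 = I"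
proof -
  have "{list_prod R xs |xs. length xs = 1 \<and> set xs \<subseteq> I} = I"
    by (force simp: length_Suc_conv intro: exI[of _ "[_]"])
  thus ?thesis unfolding ideal_pow_def
    using genideal_minimal[OF is_ideal] genideal_self[OF a_subset] by auto
qed

lemma (in ideal) ideal_pow_mult_left:
  assumes y: "y \<in> I" and x: "x \<in> ideal_pow R I n"
  shows "y \<otimes> x \<in> ideal_pow R I (Suc n)"
proof -
  interpret P: ideal "ideal_pow R I (Suc n)" R by (rule ideal_pow_is_ideal[OF a_subset])
  define T where "T = {x \<in> carrier R. \<forall>y\<in>I. y \<otimes> x \<in> ideal_pow R I (Suc n)}"
  have "ideal T R"
  proof (rule idealI)
    show "subgroup T (add_monoid R)"
    proof (rule add.subgroupI)
      show "T \<subseteq> carrier R" "T \<noteq> {}"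
        using P.zero_closed by (auto simp: T_def intro!: exI[of _ \<zero>])
    qed (auto simp: T_def r_minus r_distr)
  qed (auto simp: T_def m_assoc[symmetric] I_r_closed P.I_r_closed ring_axioms)
  moreover have "{list_prod R xs |xs. length xs = n \<and> set xs \<subseteq> I} \<subseteq> T"
    using list_prod_in_ideal_pow[OF a_subset, of "_ # _"] list_prod_closed a_subset
    by (fastforce simp: T_def)
  ultimately have "ideal_pow R I n \<subseteq> T"
    unfolding ideal_pow_def[of R I n] by (rule genideal_minimal)
  thus ?thesis using x y by (auto simp: T_def)
qed

lemma (in ring) nilpotent_ideal_elem:
  assumes "ideal_pow R J n = {\<zero>}" "J \<subseteq> carrier R" "t \<in> J"
  shows "t [^] n = \<zero>"
proof -
  have "set (replicate n t) \<subseteq> J" using assms(3) by auto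
  thus ?thesis
    using list_prod_in_ideal_pow[of J "replicate n t"] list_prod_replicate[of t n] assms by auto
qed

lemma (in monoid) Units_pow_inv_cancel:
  assumes "u \<in> Units G"
  shows "inv u [^] (n::nat) \<otimes> u [^] n = \<one>" and "u [^] n \<otimes> inv u [^] n = \<one>"
proof -
  have uc: "u \<in> carrier G" "inv u \<in> carrier G" using assms by auto
  have "inv u [^] n \<otimes> u [^] n = (inv u \<otimes> u) [^] n"
    by (rule pow_mult_distrib[symmetric]; use assms uc in simp)
  thus "inv u [^] n \<otimes> u [^] n = \<one>" using assms by simp
  have "u [^] n \<otimes> inv u [^] n = (u \<otimes> inv u) [^] n"
    by (rule pow_mult_distrib[symmetric]; use assms uc in simp)
  thus "u [^] n \<otimes> inv u [^] n = \<one>" using assms by simp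
qed

lemma (in monoid) Units_pow_inv:
  "u \<in> Units G \<Longrightarrow> inv (u [^] (n::nat)) = inv u [^] n"
  using Units_pow_inv_cancel inv_unique' by (metis Units_closed Units_inv_closed nat_pow_closed)

lemma (in monoid) frac_expand:
  assumes u: "u \<in> Units G" and c: "c \<in> carrier G"
  shows "c \<otimes> inv u [^] (m::nat) = (c \<otimes> u [^] (j::nat)) \<otimes> inv u [^] (j + m)"
proof -
  have uc: "u \<in> carrier G" "inv u \<in> carrier G" using u by auto
  have "(c \<otimes> u [^] j) \<otimes> inv u [^] (j + m) = c \<otimes> (u [^] j \<otimes> inv u [^] j) \<otimes> inv u [^] m"
    using uc c by (simp add: nat_pow_mult[symmetric] m_assoc)
  thus ?thesis using Units_pow_inv_cancel[OF u] c u by simp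
qed

lemma (in monoid) frac_expand_left:
  assumes u: "u \<in> Units G" and c: "c \<in> carrier G"
  shows "inv u [^] (m::nat) \<otimes> c = inv u [^] (m + j) \<otimes> (u [^] (j::nat) \<otimes> c)"
proof -
  have uc: "u \<in> carrier G" "inv u \<in> carrier G" using u by auto
  have "inv u [^] (m + j) \<otimes> (u [^] j \<otimes> c) = inv u [^] m \<otimes> (inv u [^] j \<otimes> u [^] j) \<otimes> c"
    using uc c by (simp add: nat_pow_mult[symmetric] m_assoc)
  thus ?thesis using Units_pow_inv_cancel[OF u] c u by simp
qed

lemma (in monoid) frac_eq_iff:
  assumes u: "u \<in> Units G" and c: "c \<in> carrier G" and d: "d \<in> carrier G"
  shows "c \<otimes> inv u [^] (m::nat) = d \<otimes> inv u [^] (n::nat) \<longleftrightarrow> c \<otimes> u [^] n = d \<otimes> u [^] m"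
proof
  have cancel: "x \<otimes> inv u [^] k \<otimes> u [^] k = x" if "x \<in> carrier G" for x and k :: nat
    using Units_pow_inv_cancel[OF u] that u by (simp add: m_assoc Units_closed)
  assume "c \<otimes> inv u [^] m = d \<otimes> inv u [^] n"
  hence "(c \<otimes> u [^] n) \<otimes> inv u [^] (n + m) = (d \<otimes> u [^] m) \<otimes> inv u [^] (n + m)"
    using frac_expand[OF u c, of m n] frac_expand[OF u d, of n m] by (simp add: add.commute)
  hence "(c \<otimes> u [^] n) \<otimes> inv u [^] (n + m) \<otimes> u [^] (n + m)
       = (d \<otimes> u [^] m) \<otimes> inv u [^] (n + m) \<otimes> u [^] (n + m)" by simp
  thus "c \<otimes> u [^] n = d \<otimes> u [^] m"
    using cancel c d u by (metis Units_closed m_closed nat_pow_closed)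
next
  assume "c \<otimes> u [^] n = d \<otimes> u [^] m"
  thus "c \<otimes> inv u [^] m = d \<otimes> inv u [^] n"
    using frac_expand[OF u c, of m n] frac_expand[OF u d, of n m] by (simp add: add.commute)
qed

lemma (in monoid) frac_swap_iff:
  assumes u: "u \<in> Units G" and c: "c \<in> carrier G" and d: "d \<in> carrier G"
  shows "inv u [^] (q::nat) \<otimes> c = d \<otimes> inv u [^] (p::nat) \<longleftrightarrow> c \<otimes> u [^] p = u [^] q \<otimes> d"
proof -
  have uc: "u \<in> carrier G" "inv u \<in> carrier G" using u by auto
  have "inv u [^] q \<otimes> c = d \<otimes> inv u [^] p \<longleftrightarrow>
        u [^] q \<otimes> (inv u [^] q \<otimes> c) \<otimes> u [^] p = u [^] q \<otimes> (d \<otimes> inv u [^] p) \<otimes> u [^] p"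
  proof
    assume "u [^] q \<otimes> (inv u [^] q \<otimes> c) \<otimes> u [^] p = u [^] q \<otimes> (d \<otimes> inv u [^] p) \<otimes> u [^] p"
    hence "inv u [^] q \<otimes> (u [^] q \<otimes> (inv u [^] q \<otimes> c) \<otimes> u [^] p) \<otimes> inv u [^] p
         = inv u [^] q \<otimes> (u [^] q \<otimes> (d \<otimes> inv u [^] p) \<otimes> u [^] p) \<otimes> inv u [^] p" by simp
    thus "inv u [^] q \<otimes> c = d \<otimes> inv u [^] p"
      using Units_pow_inv_cancel[OF u] uc c d by (simp add: m_assoc[symmetric]) (simp add: m_assoc)
  qed simp
  also have "\<dots> \<longleftrightarrow> c \<otimes> u [^] p = u [^] q \<otimes> d"
    using Units_pow_inv_cancel[OF u] uc c d by (simp add: m_assoc[symmetric]) (simp add: m_assoc)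
  finally show ?thesis .
qed

lemma (in monoid) Units_of_left_right_inverse:
  assumes x: "x \<in> carrier G" and r: "r \<in> carrier G" "x \<otimes> r = \<one>"
    and l: "l \<in> carrier G" "l \<otimes> x = \<one>"
  shows "x \<in> Units G"
proof -
  have "l = r" using x r l by (metis m_assoc l_one r_one)
  thus ?thesis using x r l unfolding Units_def by auto
qed

lemma (in ring) add_frac:
  assumes u: "u \<in> Units R" and c: "c1 \<in> carrier R" "c2 \<in> carrier R"
  shows "c1 \<otimes> inv u [^] (m1::nat) \<oplus> c2 \<otimes> inv u [^] (m2::nat)
       = (c1 \<otimes> u [^] m2 \<oplus> c2 \<otimes> u [^] m1) \<otimes> inv u [^] (m1 + m2)"
  using frac_expand[OF u c(1), of m1 m2] frac_expand[OF u c(2), of m2 m1] u c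
  by (simp add: l_distr add.commute Units_closed)

lemma (in ring) frac_eq_zero_iff:
  assumes u: "u \<in> Units R" and c: "c \<in> carrier R"
  shows "c \<otimes> inv u [^] (n::nat) = \<zero> \<longleftrightarrow> c = \<zero>"
proof
  assume "c \<otimes> inv u [^] n = \<zero>"
  hence "c \<otimes> (inv u [^] n \<otimes> u [^] n) = \<zero>"
    using u c by (simp add: m_assoc[symmetric] Units_closed)
  thus "c = \<zero>" using Units_pow_inv_cancel[OF u] c by simp
qed (use u in \<open>simp add: Units_closed\<close>)

lemma (in ring) frac_left_eq_zero_iff:
  assumes u: "u \<in> Units R" and c: "c \<in> carrier R"
  shows "inv u [^] (n::nat) \<otimes> c = \<zero> \<longleftrightarrow> c = \<zero>"
proof
  assume "inv u [^] n \<otimes> c = \<zero>"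
  hence "(u [^] n \<otimes> inv u [^] n) \<otimes> c = \<zero>"
    using u c by (simp add: m_assoc Units_closed)
  thus "c = \<zero>" using Units_pow_inv_cancel[OF u] c by simp
qed (use u in \<open>simp add: Units_closed\<close>)

lemma (in ring) one_minus_nilpotent_Units:
  assumes t: "t \<in> carrier R" and nil: "t [^] (n::nat) = \<zero>"
  shows "\<one> \<ominus> t \<in> Units R"
proof -
  \<comment> \<open>g is the geometric sum 1 + t + ... + t^(k-1)\<close>
  have "\<exists>g\<in>carrier R. (\<one> \<ominus> t) \<otimes> g = \<one> \<ominus> t [^] k \<and> g \<otimes> (\<one> \<ominus> t) = \<one> \<ominus> t [^] k
          \<and> t \<otimes> g = g \<otimes> t" for k :: nat
  proof (induct k)
    case 0 show ?case using t by (intro bexI[of _ \<zero>]) (auto simp: minus_eq r_neg)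
  next
    case (Suc k)
    then obtain g where g: "g \<in> carrier R" "(\<one> \<ominus> t) \<otimes> g = \<one> \<ominus> t [^] k"
      "g \<otimes> (\<one> \<ominus> t) = \<one> \<ominus> t [^] k" "t \<otimes> g = g \<otimes> t" by blast
    have tk: "t [^] k \<in> carrier R" using t by simp
    have "(\<one> \<ominus> t) \<otimes> (\<one> \<oplus> t \<otimes> g) = (\<one> \<ominus> t) \<oplus> t \<otimes> ((\<one> \<ominus> t) \<otimes> g)"
      using t g(1) by (simp add: r_distr l_distr minus_eq r_minus l_minus m_assoc a_ac)
    also have "\<dots> = \<one> \<ominus> t \<otimes> t [^] k" unfolding g(2) using t tk by (simp add: r_distr r_minus minus_eq a_assoc r_neg1)
    finally have 1: "(\<one> \<ominus> t) \<otimes> (\<one> \<oplus> t \<otimes> g) = \<one> \<ominus> t [^] Suc k"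
      unfolding nat_pow_Suc2[OF t] .
    have "(\<one> \<oplus> t \<otimes> g) \<otimes> (\<one> \<ominus> t) = (\<one> \<ominus> t) \<oplus> t \<otimes> (g \<otimes> (\<one> \<ominus> t))"
      using t g(1) by algebra
    also have "\<dots> = \<one> \<ominus> t \<otimes> t [^] k" unfolding g(3) using t tk by (simp add: r_distr r_minus minus_eq a_assoc r_neg1)
    finally have 2: "(\<one> \<oplus> t \<otimes> g) \<otimes> (\<one> \<ominus> t) = \<one> \<ominus> t [^] Suc k"
      unfolding nat_pow_Suc2[OF t] .
    have "(\<one> \<oplus> t \<otimes> g) \<otimes> t = t \<oplus> t \<otimes> (g \<otimes> t)" using t g(1) by algebra
    also have "\<dots> = t \<oplus> t \<otimes> (t \<otimes> g)" using g(4) by simp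
    also have "\<dots> = t \<otimes> (\<one> \<oplus> t \<otimes> g)" using t g(1) by (simp add: r_distr)
    finally have 3: "t \<otimes> (\<one> \<oplus> t \<otimes> g) = (\<one> \<oplus> t \<otimes> g) \<otimes> t" by simp
    show ?case using 1 2 3 t g(1) by (intro bexI[of _ "\<one> \<oplus> t \<otimes> g"]) auto
  qed
  from this[of n] obtain g where "g \<in> carrier R" "(\<one> \<ominus> t) \<otimes> g = \<one>" "g \<otimes> (\<one> \<ominus> t) = \<one>"
    using nil by (auto simp: minus_eq)
  thus ?thesis using t unfolding Units_def by auto
qed

lemma (in ring_hom_ring) hom_minus:
  "x \<in> carrier R \<Longrightarrow> y \<in> carrier R \<Longrightarrow> h (x \<ominus>\<^bsub>R\<^esub> y) = h x \<ominus>\<^bsub>S\<^esub> h y"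
  by (simp add: R.minus_eq S.minus_eq)

lemma (in ring_hom_ring) hom_Units_inv:
  assumes "x \<in> Units R" shows "h x \<in> Units S" and "h (inv\<^bsub>R\<^esub> x) = inv\<^bsub>S\<^esub> (h x)"
proof -
  have x: "x \<in> carrier R" "inv\<^bsub>R\<^esub> x \<in> carrier R" using assms by auto
  have "h x \<otimes>\<^bsub>S\<^esub> h (inv\<^bsub>R\<^esub> x) = \<one>\<^bsub>S\<^esub>" "h (inv\<^bsub>R\<^esub> x) \<otimes>\<^bsub>S\<^esub> h x = \<one>\<^bsub>S\<^esub>"
    using assms x by (simp_all flip: hom_mult)
  thus "h x \<in> Units S" "h (inv\<^bsub>R\<^esub> x) = inv\<^bsub>S\<^esub> (h x)"
    using x S.inv_unique' unfolding Units_def by force+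
qed

lemma (in ring_hom_ring) Units_lift_nil_kernel:
  assumes surj: "h ` carrier R = carrier S"
    and nil: "\<And>t. t \<in> a_kernel R S h \<Longrightarrow> \<exists>n::nat. t [^]\<^bsub>R\<^esub> n = \<zero>\<^bsub>R\<^esub>"
    and x: "x \<in> carrier R" and hx: "h x \<in> Units S"
  shows "x \<in> Units R"
proof -
  have product_Units: "p \<otimes>\<^bsub>R\<^esub> q \<in> Units R"
    if pq: "p \<in> carrier R" "q \<in> carrier R" and inv: "h p \<otimes>\<^bsub>S\<^esub> h q = \<one>\<^bsub>S\<^esub>" for p q
  proof -
    have "h (\<one>\<^bsub>R\<^esub> \<ominus>\<^bsub>R\<^esub> p \<otimes>\<^bsub>R\<^esub> q) = \<zero>\<^bsub>S\<^esub>"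
      using pq inv by (simp add: hom_minus)
    moreover have "\<one>\<^bsub>R\<^esub> \<ominus>\<^bsub>R\<^esub> p \<otimes>\<^bsub>R\<^esub> q \<in> carrier R" using pq by simp
    ultimately have "\<one>\<^bsub>R\<^esub> \<ominus>\<^bsub>R\<^esub> p \<otimes>\<^bsub>R\<^esub> q \<in> a_kernel R S h"
      unfolding a_kernel_def' by blast
    then obtain n where "(\<one>\<^bsub>R\<^esub> \<ominus>\<^bsub>R\<^esub> p \<otimes>\<^bsub>R\<^esub> q) [^]\<^bsub>R\<^esub> (n::nat) = \<zero>\<^bsub>R\<^esub>"
      using nil by blast
    hence "\<one>\<^bsub>R\<^esub> \<ominus>\<^bsub>R\<^esub> (\<one>\<^bsub>R\<^esub> \<ominus>\<^bsub>R\<^esub> p \<otimes>\<^bsub>R\<^esub> q) \<in> Units R"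
      using pq by (intro R.one_minus_nilpotent_Units) auto
    moreover have "\<one>\<^bsub>R\<^esub> \<ominus>\<^bsub>R\<^esub> (\<one>\<^bsub>R\<^esub> \<ominus>\<^bsub>R\<^esub> p \<otimes>\<^bsub>R\<^esub> q) = p \<otimes>\<^bsub>R\<^esub> q"
      using pq by (simp add: R.minus_eq R.minus_add R.a_assoc[symmetric] R.r_neg)
    ultimately show ?thesis by simp
  qed
  obtain y where y: "y \<in> carrier R" "h y = inv\<^bsub>S\<^esub> (h x)"
    using surj hx by (metis S.Units_inv_closed imageE)
  have xy: "x \<otimes>\<^bsub>R\<^esub> y \<in> Units R" and yx: "y \<otimes>\<^bsub>R\<^esub> x \<in> Units R"
    using product_Units[OF x y(1)] product_Units[OF y(1) x] hx y by simp_all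
  show ?thesis
  proof (rule R.Units_of_left_right_inverse[OF x])
    show "x \<otimes>\<^bsub>R\<^esub> (y \<otimes>\<^bsub>R\<^esub> inv\<^bsub>R\<^esub> (x \<otimes>\<^bsub>R\<^esub> y)) = \<one>\<^bsub>R\<^esub>"
      using xy x y(1) by (simp add: R.m_assoc[symmetric])
    show "inv\<^bsub>R\<^esub> (y \<otimes>\<^bsub>R\<^esub> x) \<otimes>\<^bsub>R\<^esub> y \<otimes>\<^bsub>R\<^esub> x = \<one>\<^bsub>R\<^esub>"
      using yx x y(1) by (simp add: R.m_assoc)
  qed (use xy yx y(1) in auto)
qed

lemma (in ring_hom_ring) ext_right_subset_kernel:
  assumes "\<And>x. x \<in> J \<Longrightarrow> j x \<in> carrier R \<and> h (j x) = \<zero>\<^bsub>S\<^esub>"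
  shows "ext_right R j J \<subseteq> a_kernel R S h"
proof
  fix z assume "z \<in> ext_right R j J"
  then obtain ps where z: "z = foldr (\<lambda>p acc. j (fst p) \<otimes>\<^bsub>R\<^esub> snd p \<oplus>\<^bsub>R\<^esub> acc) ps \<zero>\<^bsub>R\<^esub>"
    and ps: "set ps \<subseteq> J \<times> carrier R" unfolding ext_right_def by blast
  from ps have "z \<in> carrier R \<and> h z = \<zero>\<^bsub>S\<^esub>" unfolding z
    by (induct ps) (use assms in auto)
  thus "z \<in> a_kernel R S h" unfolding a_kernel_def' by blast
qed

lemma (in ring_hom_ring) ext_left_subset_kernel:
  assumes "\<And>x. x \<in> J \<Longrightarrow> j x \<in> carrier R \<and> h (j x) = \<zero>\<^bsub>S\<^esub>"
  shows "ext_left R j J \<subseteq> a_kernel R S h"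
proof
  fix z assume "z \<in> ext_left R j J"
  then obtain ps where z: "z = foldr (\<lambda>p acc. snd p \<otimes>\<^bsub>R\<^esub> j (fst p) \<oplus>\<^bsub>R\<^esub> acc) ps \<zero>\<^bsub>R\<^esub>"
    and ps: "set ps \<subseteq> J \<times> carrier R" unfolding ext_left_def by blast
  from ps have "z \<in> carrier R \<and> h z = \<zero>\<^bsub>S\<^esub>" unfolding z
    by (induct ps) (use assms in auto)
  thus "z \<in> a_kernel R S h" unfolding a_kernel_def' by blast
qed

subsection \<open>Rings of fractions at the powers of one element\<close>

locale powers_fractions = ring A for A :: "('a, 'e) ring_scheme" (structure) +
  fixes s :: 'a and B :: "('b, 'n) ring_scheme" and i :: "'a \<Rightarrow> 'b"
  assumes s_closed: "s \<in> carrier A"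
    and fractions: "ring_of_fractions A (powers A s) B i"

sublocale powers_fractions \<subseteq> B: ring B
  using fractions by (simp add: ring_of_fractions_def)

sublocale powers_fractions \<subseteq> i: ring_hom_ring A B i
  using fractions by (intro ring_hom_ringI2 ring_axioms B.ring_axioms) (simp add: ring_of_fractions_def)

context powers_fractions
begin

abbreviation inv_s :: 'b where "inv_s \<equiv> inv\<^bsub>B\<^esub> (i s)"

lemma s_pow_in_powers: "s [^] (n::nat) \<in> powers A s"
  by (auto simp: powers_def)

lemma i_s_Units: "i s \<in> Units B"
  using fractions s_pow_in_powers[of 1] s_closed by (simp add: ring_of_fractions_def image_subset_iff)

lemma inv_s_closed: "inv_s \<in> carrier B"
  using i_s_Units by simp

lemma i_pow: "i (s [^] (n::nat)) = i s [^]\<^bsub>B\<^esub> n"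
  using i.hom_nat_pow[OF s_closed] .

lemma inv_i_pow: "inv\<^bsub>B\<^esub> (i (s [^] (n::nat))) = inv_s [^]\<^bsub>B\<^esub> n"
  using B.Units_pow_inv[OF i_s_Units] by (simp add: i_pow)

lemma fraction_right:
  assumes "b \<in> carrier B" obtains a n where "a \<in> carrier A" "b = i a \<otimes>\<^bsub>B\<^esub> inv_s [^]\<^bsub>B\<^esub> (n::nat)"
  using fractions assms unfolding ring_of_fractions_def powers_def by (auto simp: inv_i_pow)

lemma fraction_left:
  assumes "b \<in> carrier B" obtains a n where "a \<in> carrier A" "b = inv_s [^]\<^bsub>B\<^esub> (n::nat) \<otimes>\<^bsub>B\<^esub> i a"
  using fractions assms unfolding ring_of_fractions_def powers_def by (auto simp: inv_i_pow)

lemma i_eq_zero_iff: "a \<in> carrier A \<Longrightarrow> i a = \<zero>\<^bsub>B\<^esub> \<longleftrightarrow> (\<exists>n::nat. a \<otimes> s [^] n = \<zero>)"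
  using fractions unfolding ring_of_fractions_def powers_def by blast

lemma i_frac_eq_iff:
  assumes "a \<in> carrier A" "a' \<in> carrier A"
  shows "i a \<otimes>\<^bsub>B\<^esub> inv_s [^]\<^bsub>B\<^esub> (m::nat) = i a' \<otimes>\<^bsub>B\<^esub> inv_s [^]\<^bsub>B\<^esub> (n::nat)
     \<longleftrightarrow> i (a \<otimes> s [^] n) = i (a' \<otimes> s [^] m)"
  using B.frac_eq_iff[OF i_s_Units] assms s_closed by (simp add: i_pow)

lemma i_frac_swap_iff:
  assumes "a \<in> carrier A" "a' \<in> carrier A"
  shows "inv_s [^]\<^bsub>B\<^esub> (m::nat) \<otimes>\<^bsub>B\<^esub> i a = i a' \<otimes>\<^bsub>B\<^esub> inv_s [^]\<^bsub>B\<^esub> (n::nat)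
     \<longleftrightarrow> i (a \<otimes> s [^] n) = i (s [^] m \<otimes> a')"
  using B.frac_swap_iff[OF i_s_Units] assms s_closed by (simp add: i_pow)

lemma hom_frac:
  assumes "ring C" "\<phi> \<in> ring_hom B C" "a \<in> carrier A"
  shows "\<phi> (i a \<otimes>\<^bsub>B\<^esub> inv_s [^]\<^bsub>B\<^esub> (n::nat)) = \<phi> (i a) \<otimes>\<^bsub>C\<^esub> inv\<^bsub>C\<^esub> (\<phi> (i s)) [^]\<^bsub>C\<^esub> n"
proof -
  interpret \<phi>: ring_hom_ring B C \<phi> by (intro ring_hom_ringI2 B.ring_axioms assms(1,2))
  show ?thesis using assms(3) i_s_Units \<phi>.hom_Units_inv by (simp add: \<phi>.hom_nat_pow)
qed

lemma hom_frac_left: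
  assumes "ring C" "\<phi> \<in> ring_hom B C" "a \<in> carrier A"
  shows "\<phi> (inv_s [^]\<^bsub>B\<^esub> (n::nat) \<otimes>\<^bsub>B\<^esub> i a) = inv\<^bsub>C\<^esub> (\<phi> (i s)) [^]\<^bsub>C\<^esub> n \<otimes>\<^bsub>C\<^esub> \<phi> (i a)"
proof -
  interpret \<phi>: ring_hom_ring B C \<phi> by (intro ring_hom_ringI2 B.ring_axioms assms(1,2))
  show ?thesis using assms(3) i_s_Units \<phi>.hom_Units_inv by (simp add: \<phi>.hom_nat_pow)
qed

text \<open>By lift_frac_eq the chosen representation of b does not matter.\<close>
definition lift :: "('c, 'm) ring_scheme \<Rightarrow> ('a \<Rightarrow> 'c) \<Rightarrow> 'b \<Rightarrow> 'c" where
  "lift C f b = (SOME c. \<exists>a n. a \<in> carrier A \<and> b = i a \<otimes>\<^bsub>B\<^esub> inv_s [^]\<^bsub>B\<^esub> (n::nat)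
                          \<and> c = f a \<otimes>\<^bsub>C\<^esub> inv\<^bsub>C\<^esub> (f s) [^]\<^bsub>C\<^esub> n)"

context
  fixes C :: "('c, 'm) ring_scheme" and f :: "'a \<Rightarrow> 'c"
  assumes ring_C: "ring C" and f_hom: "f \<in> ring_hom A C" and f_s_Units: "f s \<in> Units C"
begin

interpretation C: ring C by (rule ring_C)
interpretation f: ring_hom_ring A C f by (intro ring_hom_ringI2 ring_axioms ring_C f_hom)

lemma f_pow: "f (s [^] (n::nat)) = f s [^]\<^bsub>C\<^esub> n"
  using f.hom_nat_pow[OF s_closed] .

lemma f_eq_if_i_eq:
  assumes x: "x \<in> carrier A" and y: "y \<in> carrier A" and eq: "i x = i y"
  shows "f x = f y"
proof -
  have "i (x \<ominus> y) = \<zero>\<^bsub>B\<^esub>" using i.hom_minus x y eq by simp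
  then obtain n :: nat where "(x \<ominus> y) \<otimes> s [^] n = \<zero>"
    using i_eq_zero_iff x y by blast
  hence "f (x \<ominus> y) \<otimes>\<^bsub>C\<^esub> f s [^]\<^bsub>C\<^esub> n = \<zero>\<^bsub>C\<^esub>"
    using x y s_closed by (metis f.hom_mult f.hom_zero f_pow minus_closed nat_pow_closed)
  moreover have "f s [^]\<^bsub>C\<^esub> n \<in> Units C" using C.Units_pow_closed[OF f_s_Units] .
  ultimately have "f (x \<ominus> y) = \<zero>\<^bsub>C\<^esub>"
    using x y by (metis C.Units_closed C.Units_r_inv C.Units_inv_closed C.l_null C.m_assoc
        C.r_one f.hom_closed minus_closed)
  thus ?thesis using x y f.hom_minus by simp
qed

lemma lift_frac_eq:
  assumes a: "a \<in> carrier A" and a': "a' \<in> carrier A"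
    and eq: "i a \<otimes>\<^bsub>B\<^esub> inv_s [^]\<^bsub>B\<^esub> (m::nat) = i a' \<otimes>\<^bsub>B\<^esub> inv_s [^]\<^bsub>B\<^esub> (n::nat)"
  shows "f a \<otimes>\<^bsub>C\<^esub> inv\<^bsub>C\<^esub> (f s) [^]\<^bsub>C\<^esub> m = f a' \<otimes>\<^bsub>C\<^esub> inv\<^bsub>C\<^esub> (f s) [^]\<^bsub>C\<^esub> n"
proof -
  have "f (a \<otimes> s [^] n) = f (a' \<otimes> s [^] m)"
    using eq i_frac_eq_iff a a' s_closed by (intro f_eq_if_i_eq) auto
  thus ?thesis using C.frac_eq_iff[OF f_s_Units] a a' s_closed by (simp add: f_pow)
qed

lemma lift_frac: "a \<in> carrier A \<Longrightarrow>
  lift C f (i a \<otimes>\<^bsub>B\<^esub> inv_s [^]\<^bsub>B\<^esub> (n::nat)) = f a \<otimes>\<^bsub>C\<^esub> inv\<^bsub>C\<^esub> (f s) [^]\<^bsub>C\<^esub> n"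
  unfolding lift_def by (rule someI2, blast) (metis lift_frac_eq)

lemma lift_i: "a \<in> carrier A \<Longrightarrow> lift C f (i a) = f a"
  using lift_frac[of a 0] by simp

lemma lift_hom: "lift C f \<in> ring_hom B C"
proof (rule ring_hom_memI)
  fix x assume "x \<in> carrier B"
  then obtain a n where "a \<in> carrier A" "x = i a \<otimes>\<^bsub>B\<^esub> inv_s [^]\<^bsub>B\<^esub> (n::nat)"
    by (rule fraction_right)
  thus "lift C f x \<in> carrier C" using lift_frac f_s_Units by simp
next
  fix x y assume "x \<in> carrier B" "y \<in> carrier B"
  then obtain a m b n where a: "a \<in> carrier A" "x = i a \<otimes>\<^bsub>B\<^esub> inv_s [^]\<^bsub>B\<^esub> (m::nat)"
    and b: "b \<in> carrier A" "y = i b \<otimes>\<^bsub>B\<^esub> inv_s [^]\<^bsub>B\<^esub> (n::nat)"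
    by (metis fraction_right)
  \<comment> \<open>move the denominator of x past the numerator of y\<close>
  obtain c k where c: "c \<in> carrier A" "inv_s [^]\<^bsub>B\<^esub> m \<otimes>\<^bsub>B\<^esub> i b = i c \<otimes>\<^bsub>B\<^esub> inv_s [^]\<^bsub>B\<^esub> (k::nat)"
    using b inv_s_closed by (metis B.m_closed B.nat_pow_closed fraction_right i.hom_closed)
  have "f (b \<otimes> s [^] k) = f (s [^] m \<otimes> c)"
    using c(2) i_frac_swap_iff b c s_closed by (intro f_eq_if_i_eq) auto
  hence c_C: "inv\<^bsub>C\<^esub> (f s) [^]\<^bsub>C\<^esub> m \<otimes>\<^bsub>C\<^esub> f b = f c \<otimes>\<^bsub>C\<^esub> inv\<^bsub>C\<^esub> (f s) [^]\<^bsub>C\<^esub> k"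
    using C.frac_swap_iff[OF f_s_Units] b c s_closed by (simp add: f_pow)
  have "x \<otimes>\<^bsub>B\<^esub> y = i a \<otimes>\<^bsub>B\<^esub> (inv_s [^]\<^bsub>B\<^esub> m \<otimes>\<^bsub>B\<^esub> i b) \<otimes>\<^bsub>B\<^esub> inv_s [^]\<^bsub>B\<^esub> n"
    using a b inv_s_closed by (simp add: B.m_assoc)
  also have "\<dots> = i (a \<otimes> c) \<otimes>\<^bsub>B\<^esub> inv_s [^]\<^bsub>B\<^esub> (k + n)"
    using a c inv_s_closed by (simp add: B.m_assoc B.nat_pow_mult)
  finally have "lift C f (x \<otimes>\<^bsub>B\<^esub> y) = lift C f (i (a \<otimes> c) \<otimes>\<^bsub>B\<^esub> inv_s [^]\<^bsub>B\<^esub> (k + n))"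
    by (simp only:)
  also have "\<dots> = f (a \<otimes> c) \<otimes>\<^bsub>C\<^esub> inv\<^bsub>C\<^esub> (f s) [^]\<^bsub>C\<^esub> (k + n)"
    using lift_frac[OF m_closed[OF a(1) c(1)]] .
  also have "\<dots> = f a \<otimes>\<^bsub>C\<^esub> (f c \<otimes>\<^bsub>C\<^esub> inv\<^bsub>C\<^esub> (f s) [^]\<^bsub>C\<^esub> k) \<otimes>\<^bsub>C\<^esub> inv\<^bsub>C\<^esub> (f s) [^]\<^bsub>C\<^esub> n"
    using a c f_s_Units by (simp add: C.m_assoc C.nat_pow_mult)
  also have "\<dots> = lift C f x \<otimes>\<^bsub>C\<^esub> lift C f y"
    unfolding c_C[symmetric] using a b f_s_Units lift_frac by (simp add: C.m_assoc)
  finally show "lift C f (x \<otimes>\<^bsub>B\<^esub> y) = lift C f x \<otimes>\<^bsub>C\<^esub> lift C f y" .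
next
  fix x y assume "x \<in> carrier B" "y \<in> carrier B"
  then obtain a m b n where a: "a \<in> carrier A" "x = i a \<otimes>\<^bsub>B\<^esub> inv_s [^]\<^bsub>B\<^esub> (m::nat)"
    and b: "b \<in> carrier A" "y = i b \<otimes>\<^bsub>B\<^esub> inv_s [^]\<^bsub>B\<^esub> (n::nat)"
    by (metis fraction_right)
  have "x \<oplus>\<^bsub>B\<^esub> y = i (a \<otimes> s [^] n \<oplus> b \<otimes> s [^] m) \<otimes>\<^bsub>B\<^esub> inv_s [^]\<^bsub>B\<^esub> (m + n)"
    using B.add_frac[OF i_s_Units] a b s_closed by (simp add: i_pow)
  hence "lift C f (x \<oplus>\<^bsub>B\<^esub> y) = lift C f (i (a \<otimes> s [^] n \<oplus> b \<otimes> s [^] m) \<otimes>\<^bsub>B\<^esub> inv_s [^]\<^bsub>B\<^esub> (m + n))"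
    by (simp only:)
  also have "\<dots> = f (a \<otimes> s [^] n \<oplus> b \<otimes> s [^] m) \<otimes>\<^bsub>C\<^esub> inv\<^bsub>C\<^esub> (f s) [^]\<^bsub>C\<^esub> (m + n)"
    by (rule lift_frac) (use a b s_closed in simp)
  also have "\<dots> = lift C f x \<oplus>\<^bsub>C\<^esub> lift C f y"
    using C.add_frac[OF f_s_Units] a b s_closed lift_frac by (simp add: f_pow)
  finally show "lift C f (x \<oplus>\<^bsub>B\<^esub> y) = lift C f x \<oplus>\<^bsub>C\<^esub> lift C f y" .
next
  show "lift C f \<one>\<^bsub>B\<^esub> = \<one>\<^bsub>C\<^esub>" using lift_i[of \<one>] by simp
qed

end

end

subsection \<open>Ore conditions from a nilpotent commutator\<close>

locale nilpotent_gr_comm = ideal I A for I and A (structure) +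
  fixes s :: 'a and N :: nat
  assumes s_closed: "s \<in> carrier A"
    and ideal_pow_N: "ideal_pow A I N = {\<zero>}"
    and gr_comm: "gr_commutative A I"
begin

definition ad_right :: "'a \<Rightarrow> 'a" where "ad_right a = a \<otimes> s \<ominus> s \<otimes> a"
definition ad_left :: "'a \<Rightarrow> 'a" where "ad_left a = s \<otimes> a \<ominus> a \<otimes> s"

lemma ad_right_closed: "a \<in> carrier A \<Longrightarrow> ad_right a \<in> carrier A"
  using s_closed by (simp add: ad_right_def)

lemma ad_left_closed: "a \<in> carrier A \<Longrightarrow> ad_left a \<in> carrier A"
  using s_closed by (simp add: ad_left_def)

lemma s_pow_comm: "s [^] (m::nat) \<otimes> s = s \<otimes> s [^] m"
  using s_closed by (simp add: nat_pow_comm[of s m 1, simplified])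

lemma commutator_in_ideal: "a \<in> carrier A \<Longrightarrow> b \<in> carrier A \<Longrightarrow> a \<otimes> b \<ominus> b \<otimes> a \<in> I"
  using gr_comm unfolding gr_commutative_def by (metis ideal_pow_0 ideal_pow_1 add_0)

lemma ad_right_iter: "a \<in> ideal_pow A I k \<Longrightarrow> (ad_right ^^ j) a \<in> ideal_pow A I (k + j)"
proof (induct j)
  case (Suc j)
  moreover have "s \<in> ideal_pow A I 0" using s_closed by simp
  ultimately have "(ad_right ^^ j) a \<otimes> s \<ominus> s \<otimes> (ad_right ^^ j) a \<in> ideal_pow A I (k + j + 0 + 1)"
    using gr_comm unfolding gr_commutative_def by blast
  thus ?case using ad_right_def[of "(ad_right ^^ j) a"] by simp
qed simp

lemma ad_left_iter: "a \<in> ideal_pow A I k \<Longrightarrow> (ad_left ^^ j) a \<in> ideal_pow A I (k + j)"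
proof (induct j)
  case (Suc j)
  moreover have "s \<in> ideal_pow A I 0" using s_closed by simp
  ultimately have "s \<otimes> (ad_left ^^ j) a \<ominus> (ad_left ^^ j) a \<otimes> s \<in> ideal_pow A I (0 + (k + j) + 1)"
    using gr_comm unfolding gr_commutative_def by blast
  thus ?case using ad_left_def[of "(ad_left ^^ j) a"] by simp
qed simp

lemma ad_right_nilpotent: "a \<in> carrier A \<Longrightarrow> (ad_right ^^ N) a = \<zero>"
  using ad_right_iter[of a 0 N] ideal_pow_N by auto

lemma ad_left_nilpotent: "a \<in> carrier A \<Longrightarrow> (ad_left ^^ N) a = \<zero>"
  using ad_left_iter[of a 0 N] ideal_pow_N by auto

text \<open>The Ore condition with an explicit bound: a s = s a + ad_right a, and d commutations
  suffice when ad_right is nilpotent of order d on a.\<close>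
lemma ore_shift_right:
  assumes J: "J \<subseteq> carrier A" "\<And>x y. x \<in> J \<Longrightarrow> y \<in> J \<Longrightarrow> x \<oplus> y \<in> J"
     "\<And>x. x \<in> J \<Longrightarrow> ad_right x \<in> J" "\<And>x. x \<in> J \<Longrightarrow> x \<otimes> s \<in> J"
  shows "a \<in> J \<Longrightarrow> (ad_right ^^ d) a = \<zero> \<Longrightarrow> \<exists>a'\<in>J. a \<otimes> s [^] (m + d) = s [^] m \<otimes> a'"
proof (induct d arbitrary: a m)
  case 0
  thus ?case using s_closed by (intro bexI[of _ a]) auto
next
  case (Suc d)
  have J_pow: "x \<otimes> s [^] n \<in> J" if "x \<in> J" for x and n :: nat
    by (induct n) (use J that s_closed in \<open>auto simp: m_assoc[symmetric]\<close>)
  have a: "a \<in> carrier A" using Suc J by auto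
  have IH: "\<exists>b\<in>J. ad_right a \<otimes> s [^] (m + d) = s [^] m \<otimes> b" for m
    using Suc(1)[of "ad_right a" m] Suc(2,3) J(3) by (simp add: funpow_Suc_right del: funpow.simps)
  show ?case
  proof (induct m)
    case 0
    have "a \<otimes> s [^] (Suc d) \<in> J" by (rule J_pow[OF Suc(2)])
    thus ?case using a s_closed by (intro bexI[of _ "a \<otimes> s [^] (Suc d)"]) (simp del: nat_pow_Suc)
  next
    case (Suc m)
    then obtain a'' where a'': "a'' \<in> J" "a \<otimes> s [^] (m + Suc d) = s [^] m \<otimes> a''" by blast
    obtain b where b: "b \<in> J" "ad_right a \<otimes> s [^] (Suc m + d) = s [^] Suc m \<otimes> b" using IH by blast
    have c: "a'' \<in> carrier A" "b \<in> carrier A" using a'' b J by auto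
    have commute: "a \<otimes> s = s \<otimes> a \<oplus> ad_right a" using a s_closed unfolding ad_right_def by algebra
    have "s [^] (Suc m + Suc d) = s \<otimes> s [^] (Suc m + d)"
      by (metis add_Suc_right nat_pow_Suc2 s_closed)
    hence "a \<otimes> s [^] (Suc m + Suc d) = (a \<otimes> s) \<otimes> s [^] (Suc m + d)"
      using a s_closed by (simp add: m_assoc)
    also have "\<dots> = s \<otimes> (a \<otimes> s [^] (m + Suc d)) \<oplus> ad_right a \<otimes> s [^] (Suc m + d)"
      unfolding commute using a s_closed ad_right_closed by (simp add: l_distr m_assoc)
    also have "\<dots> = s [^] Suc m \<otimes> (a'' \<oplus> b)"
      unfolding a''(2) b(2) using c s_closed by (simp add: r_distr m_assoc[symmetric] s_pow_comm)
    finally show ?case using a'' b J by blast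
  qed
qed

lemma ore_shift_left:
  assumes J: "J \<subseteq> carrier A" "\<And>x y. x \<in> J \<Longrightarrow> y \<in> J \<Longrightarrow> x \<oplus> y \<in> J"
     "\<And>x. x \<in> J \<Longrightarrow> ad_left x \<in> J" "\<And>x. x \<in> J \<Longrightarrow> s \<otimes> x \<in> J"
  shows "a \<in> J \<Longrightarrow> (ad_left ^^ d) a = \<zero> \<Longrightarrow> \<exists>a'\<in>J. s [^] (m + d) \<otimes> a = a' \<otimes> s [^] m"
proof (induct d arbitrary: a m)
  case 0
  thus ?case using s_closed by (intro bexI[of _ a]) auto
next
  case (Suc d)
  have J_pow: "s [^] n \<otimes> x \<in> J" if "x \<in> J" for x and n :: nat
  proof (induct n)
    case (Suc n)
    have "s [^] Suc n \<otimes> x = s \<otimes> (s [^] n \<otimes> x)"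
      using subsetD[OF J(1) that] s_closed by (simp add: m_assoc s_pow_comm)
    thus ?case using J Suc by auto
  qed (use that J(1) in auto)
  have a: "a \<in> carrier A" using Suc J by auto
  have IH: "\<exists>b\<in>J. s [^] (m + d) \<otimes> ad_left a = b \<otimes> s [^] m" for m
    using Suc(1)[of "ad_left a" m] Suc(2,3) J(3) by (simp add: funpow_Suc_right del: funpow.simps)
  show ?case
  proof (induct m)
    case 0
    have "s [^] (Suc d) \<otimes> a \<in> J" by (rule J_pow[OF Suc(2)])
    thus ?case using a s_closed by (intro bexI[of _ "s [^] (Suc d) \<otimes> a"]) (simp del: nat_pow_Suc)
  next
    case (Suc m)
    then obtain a'' where a'': "a'' \<in> J" "s [^] (m + Suc d) \<otimes> a = a'' \<otimes> s [^] m" by blast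
    obtain b where b: "b \<in> J" "s [^] (Suc m + d) \<otimes> ad_left a = b \<otimes> s [^] Suc m" using IH by blast
    have c: "a'' \<in> carrier A" "b \<in> carrier A" using a'' b J by auto
    have commute: "s \<otimes> a = a \<otimes> s \<oplus> ad_left a" using a s_closed unfolding ad_left_def by algebra
    have "s [^] (Suc m + Suc d) \<otimes> a = s [^] (Suc m + d) \<otimes> (s \<otimes> a)"
      using a s_closed by (simp add: m_assoc)
    also have "\<dots> = (s [^] (m + Suc d) \<otimes> a) \<otimes> s \<oplus> s [^] (Suc m + d) \<otimes> ad_left a"
      unfolding commute using a s_closed ad_left_closed by (simp add: r_distr m_assoc)
    also have "\<dots> = (a'' \<oplus> b) \<otimes> s [^] Suc m"
      unfolding a''(2) b(2) using c s_closed by (simp add: l_distr m_assoc)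
    finally show ?case using a'' b J by blast
  qed
qed

lemma ideal_ore_right:
  assumes "ideal Q A" "a \<in> Q" shows "\<exists>a'\<in>Q. a \<otimes> s [^] (m + N) = s [^] m \<otimes> a'"
proof -
  interpret Q: ideal Q A by fact
  show ?thesis
    by (rule ore_shift_right) (use assms(2) s_closed Q.a_subset ad_right_nilpotent in
        \<open>auto simp: ad_right_def Q.I_l_closed Q.I_r_closed minus_eq\<close>)
qed

lemma ideal_ore_left:
  assumes "ideal Q A" "a \<in> Q" shows "\<exists>a'\<in>Q. s [^] (m + N) \<otimes> a = a' \<otimes> s [^] m"
proof -
  interpret Q: ideal Q A by fact
  show ?thesis
    by (rule ore_shift_left) (use assms(2) s_closed Q.a_subset ad_left_nilpotent in
        \<open>auto simp: ad_left_def Q.I_l_closed Q.I_r_closed minus_eq\<close>)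
qed

lemma right_torsion:
  assumes a: "a \<in> carrier A" and ann: "s [^] (m::nat) \<otimes> a = \<zero>"
  shows "a \<otimes> s [^] (m + N) = \<zero>"
proof -
  define J where "J = {y \<in> carrier A. s [^] m \<otimes> y = \<zero>}"
  have "\<exists>a'\<in>J. a \<otimes> s [^] (m + N) = s [^] m \<otimes> a'"
  proof (rule ore_shift_right)
    show "y \<otimes> s \<in> J" if "y \<in> J" for y
      using that s_closed by (auto simp: J_def m_assoc[symmetric])
    show "ad_right y \<in> J" if "y \<in> J" for y
    proof -
      have y: "y \<in> carrier A" "s [^] m \<otimes> y = \<zero>" using that by (auto simp: J_def)
      have "s [^] m \<otimes> ad_right y = (s [^] m \<otimes> y) \<otimes> s \<ominus> s \<otimes> (s [^] m \<otimes> y)"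
        using y(1) s_closed
        by (simp add: ad_right_def r_distr r_minus minus_eq m_assoc[symmetric] s_pow_comm)
      thus ?thesis using y s_closed ad_right_closed by (simp add: J_def minus_eq)
    qed
  qed (use a ann ad_right_nilpotent s_closed in \<open>auto simp: J_def r_distr\<close>)
  thus ?thesis by (auto simp: J_def)
qed

lemma left_torsion:
  assumes a: "a \<in> carrier A" and ann: "a \<otimes> s [^] (m::nat) = \<zero>"
  shows "s [^] (m + N) \<otimes> a = \<zero>"
proof -
  define J where "J = {y \<in> carrier A. y \<otimes> s [^] m = \<zero>}"
  have "\<exists>a'\<in>J. s [^] (m + N) \<otimes> a = a' \<otimes> s [^] m"
  proof (rule ore_shift_left)
    show "s \<otimes> y \<in> J" if "y \<in> J" for y
      using that s_closed by (auto simp: J_def m_assoc)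
    show "ad_left y \<in> J" if "y \<in> J" for y
    proof -
      have y: "y \<in> carrier A" "y \<otimes> s [^] m = \<zero>" using that by (auto simp: J_def)
      have "ad_left y \<otimes> s [^] m = s \<otimes> (y \<otimes> s [^] m) \<ominus> (y \<otimes> s [^] m) \<otimes> s"
        using y(1) s_closed
        by (simp add: ad_left_def l_distr l_minus minus_eq m_assoc s_pow_comm)
      thus ?thesis using y s_closed ad_left_closed by (simp add: J_def minus_eq)
    qed
  qed (use a ann ad_left_nilpotent s_closed in \<open>auto simp: J_def l_distr\<close>)
  thus ?thesis by (auto simp: J_def)
qed

lemma powers_denominator_set: "denominator_set A (powers A s)"
proof -
  have powers: "powers A s = range (\<lambda>n::nat. s [^] n)" by (auto simp: powers_def)
  have right_ore: "\<exists>b\<in>carrier A. \<exists>t\<in>powers A s. a \<otimes> t = s [^] m \<otimes> b"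
    if "a \<in> carrier A" for a and m :: nat
    using ideal_ore_right[OF oneideal that, of m] unfolding powers by blast
  have left_ore: "\<exists>b\<in>carrier A. \<exists>t\<in>powers A s. t \<otimes> a = b \<otimes> s [^] m"
    if "a \<in> carrier A" for a and m :: nat
    using ideal_ore_left[OF oneideal that, of m] unfolding powers by blast
  have "s [^] m \<otimes> s [^] n \<in> powers A s" for m n :: nat
    using s_closed by (simp add: nat_pow_mult powers)
  moreover have "\<one> \<in> powers A s" unfolding powers by (rule range_eqI[of _ _ 0]) simp
  ultimately show ?thesis
    unfolding denominator_set_def using s_closed right_ore left_ore
    by (auto simp: powers) (metis right_torsion, metis left_torsion)
qed

end

subsection \<open>Comparison with the localization of A/I\<close>

locale nilpotent_localization = nilpotent_gr_comm I A s N
  for I and A :: "('a, 'e) ring_scheme" (structure) and s N +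
  fixes B :: "('b, 'n) ring_scheme" and i :: "'a \<Rightarrow> 'b"
    and C :: "('c, 'm) ring_scheme" and k :: "'a set \<Rightarrow> 'c"
  assumes fractions_B: "ring_of_fractions A (powers A s) B i"
    and fractions_C: "ring_of_fractions (A Quot I) (powers (A Quot I) (I +> s)) C k"

sublocale nilpotent_localization \<subseteq> B: ring B
  using fractions_B by (simp add: ring_of_fractions_def)

sublocale nilpotent_localization \<subseteq> C: ring C
  using fractions_C by (simp add: ring_of_fractions_def)

sublocale nilpotent_localization \<subseteq> loc: powers_fractions A s B i
  by unfold_locales (rule s_closed, rule fractions_B)

sublocale nilpotent_localization \<subseteq> res: powers_fractions "A Quot I" "I +> s" C k
  using quotient_is_ring s_closed fractions_C rcos_ring_hom
  by (intro powers_fractions.intro powers_fractions_axioms.intro) (auto simp: ring_hom_closed)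

context nilpotent_localization
begin

definition reduce :: "'a \<Rightarrow> 'c" where "reduce a = k (I +> a)"

lemma reduce_hom: "reduce \<in> ring_hom A C"
proof -
  have "k \<circ> (+>) I \<in> ring_hom A C" by (rule ring_hom_trans[OF rcos_ring_hom res.i.homh])
  thus ?thesis by (simp add: comp_def reduce_def[abs_def])
qed

lemma reduce_s_Units: "reduce s \<in> Units C"
  using res.i_s_Units by (simp add: reduce_def)

lemma reduce_fraction:
  assumes "c \<in> carrier C"
  obtains a n where "a \<in> carrier A" "c = reduce a \<otimes>\<^bsub>C\<^esub> inv\<^bsub>C\<^esub> (reduce s) [^]\<^bsub>C\<^esub> (n::nat)"
proof -
  obtain r n where r: "r \<in> carrier (A Quot I)" "c = k r \<otimes>\<^bsub>C\<^esub> res.inv_s [^]\<^bsub>C\<^esub> (n::nat)"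
    using res.fraction_right[OF assms] by metis
  then obtain a where "a \<in> carrier A" "r = I +> a"
    unfolding FactRing_def A_RCOSETS_def' by auto
  with r that show ?thesis by (simp add: reduce_def)
qed

lemma reduce_eq_zero_iff:
  assumes a: "a \<in> carrier A"
  shows "reduce a = \<zero>\<^bsub>C\<^esub> \<longleftrightarrow> (\<exists>n::nat. a \<otimes> s [^] n \<in> I)"
proof -
  have product: "(I +> a) \<otimes>\<^bsub>A Quot I\<^esub> (I +> s) [^]\<^bsub>A Quot I\<^esub> n = I +> (a \<otimes> s [^] n)" for n :: nat
    using ring_hom_ring.hom_nat_pow[OF rcos_ring_hom_ring s_closed, of n] a s_closed
    by (simp add: ring_hom_mult[OF rcos_ring_hom])
  have zero: "\<zero>\<^bsub>A Quot I\<^esub> = I" by (simp add: FactRing_def)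
  have "reduce a = \<zero>\<^bsub>C\<^esub> \<longleftrightarrow> (\<exists>n::nat. (I +> a) \<otimes>\<^bsub>A Quot I\<^esub> (I +> s) [^]\<^bsub>A Quot I\<^esub> n = \<zero>\<^bsub>A Quot I\<^esub>)"
    using res.i_eq_zero_iff ring_hom_closed[OF rcos_ring_hom a] by (simp add: reduce_def)
  also have "\<dots> \<longleftrightarrow> (\<exists>n::nat. I +> (a \<otimes> s [^] n) = I)"
    by (simp only: product zero)
  also have "\<dots> \<longleftrightarrow> (\<exists>n::nat. a \<otimes> s [^] n \<in> I)"
    using a s_closed rcos_const_imp_mem a_rcos_zero[OF is_ideal] by (meson m_closed nat_pow_closed)
  finally show ?thesis .
qed

lemma reduce_ideal: "x \<in> I \<Longrightarrow> reduce x = \<zero>\<^bsub>C\<^esub>"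
  using reduce_eq_zero_iff[of x] nat_pow_0 by (metis a_subset r_one subsetD)

lemma ore_shift_fraction:
  assumes "ideal Q A" "x \<in> Q"
  obtains x' where "x' \<in> Q"
    "loc.inv_s [^]\<^bsub>B\<^esub> (m::nat) \<otimes>\<^bsub>B\<^esub> i x = i x' \<otimes>\<^bsub>B\<^esub> loc.inv_s [^]\<^bsub>B\<^esub> (m + N)"
proof -
  obtain x' where x': "x' \<in> Q" "x \<otimes> s [^] (m + N) = s [^] m \<otimes> x'"
    using ideal_ore_right[OF assms] by blast
  have "x \<in> carrier A" "x' \<in> carrier A"
    using assms x'(1) ideal.axioms(1) additive_subgroup.a_subset by blast+
  with x' that show ?thesis using loc.i_frac_swap_iff by metis
qed

definition comparison :: "'b \<Rightarrow> 'c" where "comparison = loc.lift C reduce"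

lemma comparison_hom: "comparison \<in> ring_hom B C"
  unfolding comparison_def by (rule loc.lift_hom[OF C.ring_axioms reduce_hom reduce_s_Units])

lemma comparison_i: "a \<in> carrier A \<Longrightarrow> comparison (i a) = reduce a"
  unfolding comparison_def by (rule loc.lift_i[OF C.ring_axioms reduce_hom reduce_s_Units])

lemma comparison_surj: "comparison ` carrier B = carrier C"
proof
  show "comparison ` carrier B \<subseteq> carrier C" using ring_hom_closed[OF comparison_hom] by blast
  show "carrier C \<subseteq> comparison ` carrier B"
  proof
    fix c assume "c \<in> carrier C"
    then obtain a n where "a \<in> carrier A" "c = reduce a \<otimes>\<^bsub>C\<^esub> inv\<^bsub>C\<^esub> (reduce s) [^]\<^bsub>C\<^esub> (n::nat)"
      by (rule reduce_fraction)
    moreover have "comparison (i a \<otimes>\<^bsub>B\<^esub> loc.inv_s [^]\<^bsub>B\<^esub> n) = c"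
      using calculation loc.lift_frac[OF C.ring_axioms reduce_hom reduce_s_Units]
      by (simp add: comparison_def)
    ultimately show "c \<in> comparison ` carrier B"
      using loc.inv_s_closed by (metis B.m_closed B.nat_pow_closed loc.i.hom_closed image_eqI)
  qed
qed

context
  fixes \<phi> :: "'b \<Rightarrow> 'c"
  assumes \<phi>_hom: "\<phi> \<in> ring_hom B C" and \<phi>_i: "\<And>a. a \<in> carrier A \<Longrightarrow> \<phi> (i a) = reduce a"
begin

interpretation \<phi>: ring_hom_ring B C \<phi>
  by (intro ring_hom_ringI2 B.ring_axioms C.ring_axioms \<phi>_hom)

lemma \<phi>_frac: "a \<in> carrier A \<Longrightarrow>
  \<phi> (i a \<otimes>\<^bsub>B\<^esub> loc.inv_s [^]\<^bsub>B\<^esub> (n::nat)) = reduce a \<otimes>\<^bsub>C\<^esub> inv\<^bsub>C\<^esub> (reduce s) [^]\<^bsub>C\<^esub> n"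
  using loc.hom_frac[OF C.ring_axioms \<phi>_hom] \<phi>_i s_closed by simp

lemma \<phi>_frac_left: "a \<in> carrier A \<Longrightarrow>
  \<phi> (loc.inv_s [^]\<^bsub>B\<^esub> (n::nat) \<otimes>\<^bsub>B\<^esub> i a) = inv\<^bsub>C\<^esub> (reduce s) [^]\<^bsub>C\<^esub> n \<otimes>\<^bsub>C\<^esub> reduce a"
  using loc.hom_frac_left[OF C.ring_axioms \<phi>_hom] \<phi>_i s_closed by simp

lemma kernel_fraction_right:
  assumes "b \<in> a_kernel B C \<phi>"
  obtains y n where "y \<in> I" "b = i y \<otimes>\<^bsub>B\<^esub> loc.inv_s [^]\<^bsub>B\<^esub> (n::nat)"
proof -
  have b: "b \<in> carrier B" "\<phi> b = \<zero>\<^bsub>C\<^esub>" using assms unfolding a_kernel_def' by auto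
  obtain a m where a: "a \<in> carrier A" "b = i a \<otimes>\<^bsub>B\<^esub> loc.inv_s [^]\<^bsub>B\<^esub> (m::nat)"
    using loc.fraction_right[OF b(1)] by metis
  have "reduce a = \<zero>\<^bsub>C\<^esub>"
    using b(2) a \<phi>_frac C.frac_eq_zero_iff[OF reduce_s_Units] ring_hom_closed[OF reduce_hom] by simp
  then obtain j :: nat where j: "a \<otimes> s [^] j \<in> I" using reduce_eq_zero_iff a(1) by blast
  have "b = i (a \<otimes> s [^] j) \<otimes>\<^bsub>B\<^esub> loc.inv_s [^]\<^bsub>B\<^esub> (j + m)"
    using B.frac_expand[OF loc.i_s_Units] a s_closed by (simp add: loc.i_pow)
  with j that show ?thesis by blast
qed

lemma kernel_fraction_left:
  assumes "b \<in> a_kernel B C \<phi>"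
  obtains y n where "y \<in> I" "b = loc.inv_s [^]\<^bsub>B\<^esub> (n::nat) \<otimes>\<^bsub>B\<^esub> i y"
proof -
  have b: "b \<in> carrier B" "\<phi> b = \<zero>\<^bsub>C\<^esub>" using assms unfolding a_kernel_def' by auto
  obtain a m where a: "a \<in> carrier A" "b = loc.inv_s [^]\<^bsub>B\<^esub> (m::nat) \<otimes>\<^bsub>B\<^esub> i a"
    using loc.fraction_left[OF b(1)] by metis
  have "reduce a = \<zero>\<^bsub>C\<^esub>"
    using b(2) a \<phi>_frac_left C.frac_left_eq_zero_iff[OF reduce_s_Units] ring_hom_closed[OF reduce_hom]
    by simp
  then obtain j :: nat where "a \<otimes> s [^] j \<in> I" using reduce_eq_zero_iff a(1) by blast
  \<comment> \<open>commutativity of gr in degree 0 moves the power of s to the other side\<close>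
  moreover have "s [^] j \<otimes> a = (s [^] j \<otimes> a \<ominus> a \<otimes> s [^] j) \<oplus> a \<otimes> s [^] j"
    using a(1) s_closed by (simp add: minus_eq a_assoc l_neg)
  ultimately have j: "s [^] j \<otimes> a \<in> I"
    using commutator_in_ideal[of "s [^] j" a] a(1) s_closed
    by (metis additive_subgroup.a_closed[OF is_additive_subgroup] nat_pow_closed)
  have "b = loc.inv_s [^]\<^bsub>B\<^esub> (m + j) \<otimes>\<^bsub>B\<^esub> i (s [^] j \<otimes> a)"
    using B.frac_expand_left[OF loc.i_s_Units] a s_closed by (simp add: loc.i_pow)
  with j that show ?thesis by blast
qed

lemma kernel_eq_ext_right: "a_kernel B C \<phi> = ext_right B i I"
proof
  show "ext_right B i I \<subseteq> a_kernel B C \<phi>"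
    by (rule \<phi>.ext_right_subset_kernel) (use \<phi>_i reduce_ideal a_subset in auto)
  show "a_kernel B C \<phi> \<subseteq> ext_right B i I"
  proof
    fix b assume "b \<in> a_kernel B C \<phi>"
    then obtain y n where y: "y \<in> I" "b = i y \<otimes>\<^bsub>B\<^esub> loc.inv_s [^]\<^bsub>B\<^esub> (n::nat)"
      by (rule kernel_fraction_right)
    hence "b = foldr (\<lambda>p acc. i (fst p) \<otimes>\<^bsub>B\<^esub> snd p \<oplus>\<^bsub>B\<^esub> acc) [(y, loc.inv_s [^]\<^bsub>B\<^esub> n)] \<zero>\<^bsub>B\<^esub>"
      using a_subset loc.inv_s_closed by auto
    moreover have "set [(y, loc.inv_s [^]\<^bsub>B\<^esub> n)] \<subseteq> I \<times> carrier B"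
      using y(1) loc.inv_s_closed by simp
    ultimately show "b \<in> ext_right B i I" unfolding ext_right_def by blast
  qed
qed

lemma kernel_eq_ext_left: "a_kernel B C \<phi> = ext_left B i I"
proof
  show "ext_left B i I \<subseteq> a_kernel B C \<phi>"
    by (rule \<phi>.ext_left_subset_kernel) (use \<phi>_i reduce_ideal a_subset in auto)
  show "a_kernel B C \<phi> \<subseteq> ext_left B i I"
  proof
    fix b assume "b \<in> a_kernel B C \<phi>"
    then obtain y n where y: "y \<in> I" "b = loc.inv_s [^]\<^bsub>B\<^esub> (n::nat) \<otimes>\<^bsub>B\<^esub> i y"
      by (rule kernel_fraction_left)
    hence "b = foldr (\<lambda>p acc. snd p \<otimes>\<^bsub>B\<^esub> i (fst p) \<oplus>\<^bsub>B\<^esub> acc) [(y, loc.inv_s [^]\<^bsub>B\<^esub> n)] \<zero>\<^bsub>B\<^esub>"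
      using a_subset loc.inv_s_closed by auto
    moreover have "set [(y, loc.inv_s [^]\<^bsub>B\<^esub> n)] \<subseteq> I \<times> carrier B"
      using y(1) loc.inv_s_closed by simp
    ultimately show "b \<in> ext_left B i I" unfolding ext_left_def by blast
  qed
qed

lemma kernel_list_prod:
  "set xs \<subseteq> a_kernel B C \<phi> \<Longrightarrow>
   \<exists>x n. x \<in> ideal_pow A I (length xs) \<and> list_prod B xs = i x \<otimes>\<^bsub>B\<^esub> loc.inv_s [^]\<^bsub>B\<^esub> (n::nat)"
proof (induct xs)
  case Nil
  show ?case using loc.inv_s_closed by (intro exI[of _ \<one>] exI[of _ "0::nat"]) simp
next
  case (Cons b xs)
  then obtain x n where x: "x \<in> ideal_pow A I (length xs)"
    "list_prod B xs = i x \<otimes>\<^bsub>B\<^esub> loc.inv_s [^]\<^bsub>B\<^esub> (n::nat)" by auto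
  obtain y m where y: "y \<in> I" "b = i y \<otimes>\<^bsub>B\<^esub> loc.inv_s [^]\<^bsub>B\<^esub> (m::nat)"
    using Cons(2) kernel_fraction_right by (metis list.set_intros(1) subsetD)
  obtain x' where x': "x' \<in> ideal_pow A I (length xs)"
    "loc.inv_s [^]\<^bsub>B\<^esub> m \<otimes>\<^bsub>B\<^esub> i x = i x' \<otimes>\<^bsub>B\<^esub> loc.inv_s [^]\<^bsub>B\<^esub> (m + N)"
    using ore_shift_fraction[OF ideal_pow_is_ideal[OF a_subset] x(1)] by blast
  have closed: "x \<in> carrier A" "x' \<in> carrier A" "y \<in> carrier A"
    using x(1) x'(1) y(1) ideal_pow_subset[OF a_subset] a_subset by auto
  have "list_prod B (b # xs) = i y \<otimes>\<^bsub>B\<^esub> (loc.inv_s [^]\<^bsub>B\<^esub> m \<otimes>\<^bsub>B\<^esub> i x) \<otimes>\<^bsub>B\<^esub> loc.inv_s [^]\<^bsub>B\<^esub> n"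
    using x(2) y(2) closed loc.inv_s_closed by (simp add: B.m_assoc)
  also have "\<dots> = i (y \<otimes> x') \<otimes>\<^bsub>B\<^esub> loc.inv_s [^]\<^bsub>B\<^esub> (m + N + n)"
    unfolding x'(2) using closed loc.inv_s_closed by (simp add: B.m_assoc B.nat_pow_mult)
  finally show ?case using ideal_pow_mult_left[OF y(1) x'(1)] by auto
qed

lemma kernel_nilpotent: "ideal_pow B (a_kernel B C \<phi>) N = {\<zero>\<^bsub>B\<^esub>}"
proof -
  have "list_prod B xs = \<zero>\<^bsub>B\<^esub>" if "length xs = N" "set xs \<subseteq> a_kernel B C \<phi>" for xs
    using kernel_list_prod[OF that(2)] that(1) ideal_pow_N loc.inv_s_closed by auto
  hence "ideal_pow B (a_kernel B C \<phi>) N \<subseteq> {\<zero>\<^bsub>B\<^esub>}"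
    unfolding ideal_pow_def by (intro B.genideal_minimal B.zeroideal) blast
  moreover have "\<zero>\<^bsub>B\<^esub> \<in> ideal_pow B (a_kernel B C \<phi>) N"
    using B.ideal_pow_is_ideal[OF \<phi>.kernel_is_ideal[THEN ideal.axioms(1),
          THEN additive_subgroup.a_subset]]
    by (simp add: additive_subgroup.zero_closed ideal.axioms(1))
  ultimately show ?thesis by blast
qed

end

lemma i_Units_iff:
  assumes a: "a \<in> carrier A" shows "i a \<in> Units B \<longleftrightarrow> reduce a \<in> Units C"
proof -
  interpret comp: ring_hom_ring B C comparison
    by (intro ring_hom_ringI2 B.ring_axioms C.ring_axioms comparison_hom)
  have "\<exists>n::nat. t [^]\<^bsub>B\<^esub> n = \<zero>\<^bsub>B\<^esub>" if "t \<in> a_kernel B C comparison" for t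
    using B.nilpotent_ideal_elem[OF kernel_nilpotent[OF comparison_hom comparison_i]] that
      comp.kernel_is_ideal[THEN ideal.axioms(1), THEN additive_subgroup.a_subset] by blast
  thus ?thesis
    using comp.Units_lift_nil_kernel[OF comparison_surj] comp.hom_Units_inv(1) comparison_i a
    by (metis loc.i.hom_closed)
qed

lemma comparison_properties:
  "(\<exists>\<phi>. \<phi> \<in> ring_hom B C \<and> (\<forall>a\<in>carrier A. \<phi> (i a) = k (I +> a)) \<and> \<phi> ` carrier B = carrier C) \<and>
   (\<forall>\<phi>. \<phi> \<in> ring_hom B C \<and> (\<forall>a\<in>carrier A. \<phi> (i a) = k (I +> a)) \<longrightarrow>
         a_kernel B C \<phi> = ext_right B i I \<and> a_kernel B C \<phi> = ext_left B i I \<and>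
         ideal (a_kernel B C \<phi>) B \<and> nilpotent_ideal B (a_kernel B C \<phi>)) \<and>
   (\<forall>a\<in>carrier A. i a \<in> Units B \<longleftrightarrow> k (I +> a) \<in> Units C)"
  using comparison_hom comparison_i comparison_surj kernel_eq_ext_right kernel_eq_ext_left
    ring_hom_ring.kernel_is_ideal[OF ring_hom_ringI2] kernel_nilpotent i_Units_iff
    B.ring_axioms C.ring_axioms
  unfolding reduce_def nilpotent_ideal_def by metis

end

theorem lemma2p10:
  fixes A :: "'a ring" and I :: "'a set" and s :: 'a
  assumes "ring A" and "ideal I A" and "nilpotent_ideal A I"
    and "gr_commutative A I" and "s \<in> carrier A"
  shows "denominator_set A (powers A s) \<and>
         (\<forall>(B :: 'b ring) i (C :: 'c ring) k.
           ring_of_fractions A (powers A s) B i \<and>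
           ring_of_fractions (A Quot I) (powers (A Quot I) (I +>\<^bsub>A\<^esub> s)) C k \<longrightarrow>
           (\<exists>\<phi>. \<phi> \<in> ring_hom B C \<and> (\<forall>a\<in>carrier A. \<phi> (i a) = k (I +>\<^bsub>A\<^esub> a))
                 \<and> \<phi> ` carrier B = carrier C) \<and>
           (\<forall>\<phi>. \<phi> \<in> ring_hom B C \<and> (\<forall>a\<in>carrier A. \<phi> (i a) = k (I +>\<^bsub>A\<^esub> a)) \<longrightarrow>
                 a_kernel B C \<phi> = ext_right B i I \<and>
                 a_kernel B C \<phi> = ext_left B i I \<and>
                 ideal (a_kernel B C \<phi>) B \<and>
                 nilpotent_ideal B (a_kernel B C \<phi>)) \<and>
           (\<forall>a\<in>carrier A. i a \<in> Units B \<longleftrightarrow> k (I +>\<^bsub>A\<^esub> a) \<in> Units C))"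
proof -
  obtain N where "ideal_pow A I N = {\<zero>\<^bsub>A\<^esub>}"
    using assms(3) unfolding nilpotent_ideal_def by blast
  then interpret nilpotent_gr_comm I A s N
    using assms by (intro nilpotent_gr_comm.intro nilpotent_gr_comm_axioms.intro)
  have localization: "nilpotent_localization I A s N B i C k"
    if "ring_of_fractions A (powers A s) B i"
      and "ring_of_fractions (A Quot I) (powers (A Quot I) (I +>\<^bsub>A\<^esub> s)) C k"
    for B :: "'b ring" and i and C :: "'c ring" and k
    using that by (intro nilpotent_localization.intro nilpotent_localization_axioms.intro
        nilpotent_gr_comm_axioms)
  show ?thesis
    using powers_denominator_set nilpotent_localization.comparison_properties[OF localization] by blast
qed

end
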